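(* There exists an input distribution $\mathcal D$ over metric spaces together with dynamic point (ID) streams in these metrics such that, for any deterministic streaming algorithm $\mathcal A$, when its input is sampled from $\mathcal D$, $\mathcal A$ must use $\Omega(n^{1/3})$ space to compute a $\mathrm{poly}(n)$-approximation of MaxCut (of the points remaining at the end of the stream) with probability at least $0.55$, where $n$ is the number of points.
   Context: Dynamic streaming model: a set of points in an underlying metric space $(V,\mathrm{dist})$ is presented as a stream of insertions and deletions of point IDs; at the end the algorithm must report an estimate of $\mathrm{MaxCut}$ of the points inserted and not deleted. The algorithm may store or manipulate arbitrary encodings of IDs and has access to a distance oracle which, on two IDs, returns the distance between the corresponding points; a query is permitted only if both IDs are valid, i.e. have appeared in the stream (querying an invalid ID makes the algorithm fail immediately). Here $\mathrm{cut}(S,T):=\sum_{x\in S}\sum_{y\in T}\mathrm{dist}(x,y)$ and $\mathrm{MaxCut}(P):=\max_{S\subseteq P}\mathrm{cut}(S,P\setminus S)$; an $\alpha$-approximation is a value $E$ with $\mathrm{MaxCut}(P)/\alpha\le E\le\mathrm{MaxCut}(P)$. *)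

theory Defs
  imports "HOL-Probability.Probability"
begin

text \<open>Points of the underlying metric space are identified by IDs (natural numbers).
  A stream is a list of insertions / deletions of IDs.\<close>

datatype op = Ins nat | Del nat

fun op_id :: "op \<Rightarrow> nat" where
  "op_id (Ins i) = i"
| "op_id (Del i) = i"

fun wf_stream :: "nat set \<Rightarrow> op list \<Rightarrow> bool" where
  "wf_stream P [] = True"
| "wf_stream P (Ins i # xs) = (i \<notin> P \<and> wf_stream (insert i P) xs)"
| "wf_stream P (Del i # xs) = (i \<in> P \<and> wf_stream (P - {i}) xs)"

fun final_set :: "nat set \<Rightarrow> op list \<Rightarrow> nat set" where
  "final_set P [] = P"
| "final_set P (Ins i # xs) = final_set (insert i P) xs"
| "final_set P (Del i # xs) = final_set (P - {i}) xs"

definition stream_ids :: "op list \<Rightarrow> nat set" where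
  "stream_ids xs = op_id ` set xs"

definition cut :: "(nat \<Rightarrow> nat \<Rightarrow> real) \<Rightarrow> nat set \<Rightarrow> nat set \<Rightarrow> real" where
  "cut d S T = (\<Sum>x\<in>S. \<Sum>y\<in>T. d x y)"

definition MaxCut :: "(nat \<Rightarrow> nat \<Rightarrow> real) \<Rightarrow> nat set \<Rightarrow> real" where
  "MaxCut d P = Max {cut d S (P - S) | S. S \<subseteq> P}"

definition is_metric_on :: "nat set \<Rightarrow> (nat \<Rightarrow> nat \<Rightarrow> real) \<Rightarrow> bool" where
  "is_metric_on V d \<longleftrightarrow>
     (\<forall>x\<in>V. \<forall>y\<in>V. d x y = d y x \<and> (d x y = 0 \<longleftrightarrow> x = y) \<and> d x y \<ge> 0) \<and>
     (\<forall>x\<in>V. \<forall>y\<in>V. \<forall>z\<in>V. d x z \<le> d x y + d y z)"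

text \<open>An adaptive computation with distance-oracle queries: either return a value, or
  query the distance between two IDs and continue depending on the answer.\<close>
datatype 'r qtree = Ret 'r | Query nat nat "real \<Rightarrow> 'r qtree"

primrec run_q :: "(nat \<Rightarrow> nat \<Rightarrow> real) \<Rightarrow> nat set \<Rightarrow> 'r qtree \<Rightarrow> 'r option" where
  "run_q d V (Ret r) = Some r"
| "run_q d V (Query i j k) =
     (if i \<in> V \<and> j \<in> V then run_q d V (k (d i j)) else None)"

text \<open>A deterministic streaming algorithm: its memory between updates is a bit string.\<close>
record alg =
  a_init :: "bool list"
  a_step :: "bool list \<Rightarrow> op \<Rightarrow> bool list qtree"
  a_out  :: "bool list \<Rightarrow> real qtree"

text \<open>V is the set of IDs
  seen so far; the current element's ID is valid when processing it.\<close>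
fun trace :: "(nat \<Rightarrow> nat \<Rightarrow> real) \<Rightarrow> alg \<Rightarrow> nat set \<Rightarrow> bool list \<Rightarrow> op list
                \<Rightarrow> bool list list \<times> bool list option" where
  "trace d A V \<sigma> [] = ([\<sigma>], Some \<sigma>)"
| "trace d A V \<sigma> (x # xs) =
     (case run_q d (insert (op_id x) V) (a_step A \<sigma> x) of
        None \<Rightarrow> ([\<sigma>], None)
      | Some \<sigma>' \<Rightarrow> (let (tr, r) = trace d A (insert (op_id x) V) \<sigma>' xs in (\<sigma> # tr, r)))"

type_synonym stream_instance = "(nat \<Rightarrow> nat \<Rightarrow> real) \<times> op list"

definition space_used :: "alg \<Rightarrow> stream_instance \<Rightarrow> nat" where
  "space_used A I = Max (length ` set (fst (trace (fst I) A {} (a_init A) (snd I))))"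

definition alg_output :: "alg \<Rightarrow> stream_instance \<Rightarrow> real option" where
  "alg_output A I = (case snd (trace (fst I) A {} (a_init A) (snd I)) of
                   None \<Rightarrow> None
                 | Some \<sigma> \<Rightarrow> run_q (fst I) (stream_ids (snd I)) (a_out A \<sigma>))"

definition approx_success :: "real \<Rightarrow> alg \<Rightarrow> stream_instance \<Rightarrow> bool" where
  "approx_success \<alpha> A I \<longleftrightarrow>
     (\<exists>E. alg_output A I = Some E \<and>
          MaxCut (fst I) (final_set {} (snd I)) / \<alpha> \<le> E \<and>
          E \<le> MaxCut (fst I) (final_set {} (snd I)))"

definition valid_instance :: "nat \<Rightarrow> stream_instance \<Rightarrow> bool" where
  "valid_instance n I \<longleftrightarrow> is_metric_on {0..<n} (fst I) \<and> wf_stream {} (snd I) \<and>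
                          stream_ids (snd I) \<subseteq> {0..<n}"

end

(* Alice's part of the stream inserts the point 0 and, for a random word x in {0..15}^m, one
   point per coordinate j whose ID increases with j and encodes x j; Bob's part deletes the points
   of all coordinates after a random i.  Under d(a, b) = B^max(a, b) with B > n^(k+2), MaxCut of
   the remaining points is within a factor n^2 of B^p, p being the point of coordinate i, so an
   n^k-approximation reveals x i.  Bob's deletions depend only on the coordinates after i, so the
   memory after Alice's part together with those coordinates determines x i whenever the
   algorithm succeeds: a one-way protocol for augmented indexing.  A word is determined by the
   message, the set of coordinates where this decoding fails and the values there, so at most
   2^(s+1) 2^m 16^r words have at most r failures.  With r = m/2, success probability 0.55
   then forces s >= m - 5, and m is about n/32: the bound is in fact linear in n. *)
theory Submission
  imports Defs
begin

lemma run_q_mono: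
  assumes "run_q d V t = Some r" and "V \<subseteq> W"
  shows "run_q d W t = Some r"
  using assms by (induction t) (auto split: if_splits)

lemma start_in_trace: "\<sigma> \<in> set (fst (trace d A V \<sigma> xs))"
  by (cases xs) (auto split: option.splits prod.splits)

lemma trace_result_mono:
  assumes "snd (trace d A V \<sigma> xs) = Some \<sigma>'" and "V \<subseteq> W"
  shows "snd (trace d A W \<sigma> xs) = Some \<sigma>'"
  using assms
proof (induction xs arbitrary: V W \<sigma>)
  case (Cons x xs)
  from Cons.prems obtain \<sigma>1 where step: "run_q d (insert (op_id x) V) (a_step A \<sigma> x) = Some \<sigma>1"
    and rest: "snd (trace d A (insert (op_id x) V) \<sigma>1 xs) = Some \<sigma>'"
    by (auto split: option.splits prod.splits)
  have "run_q d (insert (op_id x) W) (a_step A \<sigma> x) = Some \<sigma>1"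
    using run_q_mono[OF step] Cons.prems(2) by blast
  moreover have "snd (trace d A (insert (op_id x) W) \<sigma>1 xs) = Some \<sigma>'"
    using Cons.IH[OF rest] Cons.prems(2) by blast
  ultimately show ?case by (auto split: prod.splits)
qed simp

lemma trace_append_SomeD:
  assumes "snd (trace d A V \<sigma> (xs @ ys)) = Some \<sigma>'"
  obtains \<tau> where "snd (trace d A V \<sigma> xs) = Some \<tau>"
    and "\<tau> \<in> set (fst (trace d A V \<sigma> (xs @ ys)))"
    and "snd (trace d A (V \<union> op_id ` set xs) \<tau> ys) = Some \<sigma>'"
  using assms
proof (induction xs arbitrary: V \<sigma>)
  case Nil
  then show ?case using start_in_trace by auto
next
  case (Cons x xs)
  from Cons.prems(2) obtain \<sigma>1 where step: "run_q d (insert (op_id x) V) (a_step A \<sigma> x) = Some \<sigma>1"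
    and rest: "snd (trace d A (insert (op_id x) V) \<sigma>1 (xs @ ys)) = Some \<sigma>'"
    by (auto split: option.splits prod.splits)
  show ?case
  proof (rule Cons.IH[OF _ rest])
    fix \<tau>
    assume "snd (trace d A (insert (op_id x) V) \<sigma>1 xs) = Some \<tau>"
      and "\<tau> \<in> set (fst (trace d A (insert (op_id x) V) \<sigma>1 (xs @ ys)))"
      and "snd (trace d A (insert (op_id x) V \<union> op_id ` set xs) \<tau> ys) = Some \<sigma>'"
    with step show thesis
      by (intro Cons.prems(1)[of \<tau>]) (auto split: prod.splits simp: insert_commute)
  qed
qed

lemma length_le_space_used:
  assumes "\<sigma> \<in> set (fst (trace (fst I) A {} (a_init A) (snd I)))"
  shows "length \<sigma> \<le> space_used A I"
  unfolding space_used_def using assms by (simp add: Max_ge)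

lemma wf_stream_append:
  "wf_stream P (xs @ ys) \<longleftrightarrow> wf_stream P xs \<and> wf_stream (final_set P xs) ys"
  by (induction P xs rule: wf_stream.induct) auto

lemma final_set_append: "final_set P (xs @ ys) = final_set (final_set P xs) ys"
  by (induction P xs rule: final_set.induct) auto

lemma wf_stream_map_Ins: "wf_stream P (map Ins l) \<longleftrightarrow> distinct l \<and> set l \<inter> P = {}"
  by (induction l arbitrary: P) auto

lemma final_set_map_Ins: "final_set P (map Ins l) = P \<union> set l"
  by (induction l arbitrary: P) auto

lemma wf_stream_map_Del: "wf_stream P (map Del l) \<longleftrightarrow> distinct l \<and> set l \<subseteq> P"
  by (induction l arbitrary: P) auto

lemma final_set_map_Del: "final_set P (map Del l) = P - set l"
  by (induction l arbitrary: P) auto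

section \<open>MaxCut under the distance B^max(a, b)\<close>

lemma finite_cuts: "finite P \<Longrightarrow> finite {cut d S (P - S) | S. S \<subseteq> P}"
  by (simp add: setcompr_eq_image)

lemma cut_le_MaxCut:
  assumes "finite P" and "S \<subseteq> P"
  shows "cut d S (P - S) \<le> MaxCut d P"
  unfolding MaxCut_def using assms by (intro Max_ge finite_cuts) auto

lemma MaxCut_le:
  assumes P: "finite P" and "b \<ge> 0" and bound: "\<And>x y. x \<in> P \<Longrightarrow> y \<in> P \<Longrightarrow> d x y \<le> b"
  shows "MaxCut d P \<le> real (card P) ^ 2 * b"
proof -
  have "cut d S (P - S) \<le> real (card P) ^ 2 * b" if S: "S \<subseteq> P" for S
  proof -
    have "cut d S (P - S) \<le> (\<Sum>x\<in>S. \<Sum>y\<in>P - S. b)"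
      unfolding cut_def using S bound by (intro sum_mono) auto
    also have "\<dots> = real (card S) * real (card (P - S)) * b" by simp
    also have "\<dots> \<le> real (card P) * real (card P) * b"
      using assms(1,2) S by (intro mult_right_mono mult_mono) (auto intro: card_mono)
    finally show ?thesis by (simp add: power2_eq_square)
  qed
  then show ?thesis
    unfolding MaxCut_def using finite_cuts[OF P] by (subst Max_le_iff) auto
qed

definition max_power_dist :: "real \<Rightarrow> nat \<Rightarrow> nat \<Rightarrow> real" where
  "max_power_dist B a b = (if a = b then 0 else B ^ max a b)"

lemma is_metric_on_max_power_dist:
  assumes B: "B \<ge> 1"
  shows "is_metric_on V (max_power_dist B)"
proof -
  have "max_power_dist B x z \<le> max_power_dist B x y + max_power_dist B y z" for x y z
  proof -
    have "B ^ max x z \<le> B ^ max x y \<or> B ^ max x z \<le> B ^ max y z"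
      using B by (cases "x \<le> z") (auto intro: power_increasing)
    moreover have "0 < B ^ max x y" "0 < B ^ max y z" using B by simp_all
    ultimately show ?thesis
      unfolding max_power_dist_def
      by (cases "x = y"; cases "y = z"; cases "x = z") (auto simp: max.commute)
  qed
  then show ?thesis
    using B unfolding is_metric_on_def max_power_dist_def by (auto simp: max.commute)
qed

lemma MaxCut_max_power_dist_bounds:
  assumes B: "B \<ge> 1" and P: "finite P" and top: "\<mu> \<in> P" "\<forall>y\<in>P. y \<le> \<mu>"
    and other: "\<nu> \<in> P" "\<nu> \<noteq> \<mu>"
  shows "B ^ \<mu> \<le> MaxCut (max_power_dist B) P"
    and "MaxCut (max_power_dist B) P \<le> real (card P) ^ 2 * B ^ \<mu>"
proof -
  let ?d = "max_power_dist B"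
  have nonneg: "?d x y \<ge> 0" for x y
    using B unfolding max_power_dist_def by simp
  have "B ^ \<mu> = ?d \<mu> \<nu>"
    using top other unfolding max_power_dist_def by (simp add: max_absorb1)
  also have "\<dots> \<le> (\<Sum>y\<in>P - {\<mu>}. ?d \<mu> y)"
    using P other nonneg by (intro member_le_sum) auto
  also have "\<dots> = cut ?d {\<mu>} (P - {\<mu>})" unfolding cut_def by simp
  also have "\<dots> \<le> MaxCut ?d P" using P top by (intro cut_le_MaxCut) auto
  finally show "B ^ \<mu> \<le> MaxCut ?d P" .
  have "?d x y \<le> B ^ \<mu>" if "x \<in> P" "y \<in> P" for x y
    using B top that unfolding max_power_dist_def by (auto intro: power_increasing)
  then show "MaxCut ?d P \<le> real (card P) ^ 2 * B ^ \<mu>"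
    using B P by (intro MaxCut_le) auto
qed

lemma power_level_unique:
  fixes B \<alpha> c E :: real
  assumes B: "B \<ge> 1" "c * \<alpha> < B" and \<alpha>: "\<alpha> > 0"
    and e: "B ^ e / \<alpha> \<le> E" "E \<le> c * B ^ e"
    and e': "B ^ e' / \<alpha> \<le> E" "E \<le> c * B ^ e'"
  shows "e = e'"
proof -
  have False if lt: "u < v" and lo: "B ^ v / \<alpha> \<le> E" and hi: "E \<le> c * B ^ u" for u v
  proof -
    have "B * B ^ u \<le> B ^ v" using B lt by (metis power_Suc Suc_leI power_increasing)
    also have "\<dots> \<le> \<alpha> * E" using lo \<alpha> by (simp add: field_simps)
    also have "\<dots> \<le> (c * \<alpha>) * B ^ u" using hi \<alpha> by (simp add: algebra_simps)
    also have "\<dots> < B * B ^ u" using B by (intro mult_strict_right_mono) auto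
    finally show False by simp
  qed
  then show ?thesis using e e' by (metis linorder_neqE_nat)
qed

section \<open>Augmented indexing\<close>

abbreviation words :: "nat \<Rightarrow> nat \<Rightarrow> (nat \<Rightarrow> nat) set" where
  "words q m \<equiv> Pi\<^sub>E {..<m} (\<lambda>_. {..<q})"

definition tail_after :: "nat \<Rightarrow> (nat \<Rightarrow> nat) \<Rightarrow> nat \<Rightarrow> nat" where
  "tail_after i x = (\<lambda>j. if i < j then x j else 0)"

definition guess_errors ::
    "nat \<Rightarrow> ((nat \<Rightarrow> nat) \<Rightarrow> 'm) \<Rightarrow> ('m \<Rightarrow> nat \<Rightarrow> (nat \<Rightarrow> nat) \<Rightarrow> nat) \<Rightarrow>
     (nat \<Rightarrow> nat) \<Rightarrow> nat set" where
  "guess_errors m msg guess x = {i. i < m \<and> guess (msg x) i (tail_after i x) \<noteq> x i}"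

lemma inj_on_msg_errors:
  "inj_on (\<lambda>x. (msg x, guess_errors m msg guess x, restrict x (guess_errors m msg guess x)))
     (words q m)"
proof (rule inj_onI)
  fix x y assume x: "x \<in> words q m" and y: "y \<in> words q m"
    and eq: "(msg x, guess_errors m msg guess x, restrict x (guess_errors m msg guess x)) =
             (msg y, guess_errors m msg guess y, restrict y (guess_errors m msg guess y))"
  let ?E = "guess_errors m msg guess x"
  have E: "guess_errors m msg guess y = ?E" using eq by simp
  have on_E: "x j = y j" if "j \<in> ?E" for j
  proof -
    have "restrict x ?E j = restrict y ?E j" using eq E by simp
    with that show ?thesis by simp
  qed
  \<comment> \<open>Downward induction: off the error set, x j is Bob's guess from the message and the
    coordinates after j.\<close>
  have "x j = y j" for j
  proof (induction j rule: measure_induct_rule[of "\<lambda>j. m - j"])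
    case (less j)
    show ?case
    proof (cases "j < m")
      case False
      then show ?thesis using PiE_arb[OF x] PiE_arb[OF y] by simp
    next
      case True
      have tails: "tail_after j x = tail_after j y"
      proof
        fix j' show "tail_after j x j' = tail_after j y j'"
          using less[of j'] True unfolding tail_after_def by simp
      qed
      show ?thesis
      proof (cases "j \<in> ?E")
        case False
        have "j \<notin> guess_errors m msg guess y" using False E by simp
        with False True have "x j = guess (msg x) j (tail_after j x)"
          and "y j = guess (msg y) j (tail_after j y)"
          unfolding guess_errors_def by simp_all
        with eq tails show ?thesis by simp
      qed (rule on_E)
    qed
  qed
  then show "x = y" by blast
qed

lemma card_partial_words_le:
  assumes "q > 0"
  shows "card (SIGMA V:{V. V \<subseteq> {..<m} \<and> card V \<le> r}. Pi\<^sub>E V (\<lambda>_. {..<q})) \<le> 2 ^ m * q ^ r"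
proof -
  let ?Vs = "{V. V \<subseteq> {..<m} \<and> card V \<le> r}"
  have fin: "V \<in> ?Vs \<Longrightarrow> finite V" for V by (auto intro: finite_subset)
  have "card (SIGMA V:?Vs. Pi\<^sub>E V (\<lambda>_. {..<q})) = (\<Sum>V\<in>?Vs. card (Pi\<^sub>E V (\<lambda>_. {..<q})))"
    using fin by (intro card_SigmaI) (auto intro!: finite_PiE)
  also have "\<dots> \<le> (\<Sum>V\<in>?Vs. q ^ r)"
    using fin assms by (intro sum_mono) (simp add: card_PiE power_increasing)
  also have "\<dots> \<le> card (Pow {..<m}) * q ^ r"
  proof -
    have "card ?Vs \<le> card (Pow {..<m})" by (rule card_mono) auto
    then show ?thesis by simp
  qed
  finally show ?thesis by (simp add: card_Pow)
qed

lemma card_few_errors_le: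
  assumes "finite M" and "msg ` words q m \<subseteq> M" and "q > 0"
  shows "card {x \<in> words q m. card (guess_errors m msg guess x) \<le> r} \<le> card M * 2 ^ m * q ^ r"
proof -
  let ?Few = "{x \<in> words q m. card (guess_errors m msg guess x) \<le> r}"
  let ?T = "SIGMA V:{V. V \<subseteq> {..<m} \<and> card V \<le> r}. Pi\<^sub>E V (\<lambda>_. {..<q})"
  let ?f = "\<lambda>x. (msg x, guess_errors m msg guess x, restrict x (guess_errors m msg guess x))"
  have "card ?Few = card (?f ` ?Few)"
    by (intro card_image[symmetric] inj_on_subset[OF inj_on_msg_errors]) auto
  also have "\<dots> \<le> card (M \<times> ?T)"
  proof (intro card_mono)
    have "finite {V. V \<subseteq> {..<m} \<and> card V \<le> r}"
      by (rule finite_subset[of _ "Pow {..<m}"]) auto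
    then show "finite (M \<times> ?T)"
      using assms(1)
      by (intro finite_cartesian_product finite_SigmaI finite_PiE)
         (auto dest: rev_finite_subset[OF finite_lessThan])
    show "?f ` ?Few \<subseteq> M \<times> ?T"
    proof
      fix p assume "p \<in> ?f ` ?Few"
      then obtain x where x: "x \<in> words q m" "card (guess_errors m msg guess x) \<le> r"
        and p: "p = ?f x" by blast
      have sub: "guess_errors m msg guess x \<subseteq> {..<m}" unfolding guess_errors_def by auto
      with x(1) have "restrict x (guess_errors m msg guess x) \<in> Pi\<^sub>E (guess_errors m msg guess x) (\<lambda>_. {..<q})"
        by (auto simp: restrict_PiE_iff PiE_iff)
      with sub x assms(2) show "p \<in> M \<times> ?T" unfolding p by auto
    qed
  qed
  also have "\<dots> \<le> card M * (2 ^ m * q ^ r)"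
    using card_partial_words_le[OF assms(3)] by (simp add: card_cartesian_product)
  finally show ?thesis by simp
qed

lemma sum_correct_guesses_le:
  assumes "finite M" and "msg ` words q m \<subseteq> M" and "q > 0"
  shows "(\<Sum>x\<in>words q m. card {i. i < m \<and> guess (msg x) i (tail_after i x) = x i})
           \<le> m * (card M * 2 ^ m * q ^ r) + q ^ m * (m - r)"
proof -
  let ?X = "words q m"
  let ?Few = "{x \<in> ?X. card (guess_errors m msg guess x) \<le> r}"
  let ?c = "\<lambda>x. card {i. i < m \<and> guess (msg x) i (tail_after i x) = x i}"
  have c: "?c x = m - card (guess_errors m msg guess x)" for x
  proof -
    have sub: "guess_errors m msg guess x \<subseteq> {..<m}" unfolding guess_errors_def by auto
    have "{i. i < m \<and> guess (msg x) i (tail_after i x) = x i} = {..<m} - guess_errors m msg guess x"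
      unfolding guess_errors_def by auto
    then show ?thesis using card_Diff_subset[OF finite_subset[OF sub] sub] by simp
  qed
  have fin: "finite ?X" by (simp add: finite_PiE)
  have "(\<Sum>x\<in>?X. ?c x) = (\<Sum>x\<in>?X - ?Few. ?c x) + (\<Sum>x\<in>?Few. ?c x)"
    using fin by (intro sum.subset_diff) auto
  also have "\<dots> \<le> (\<Sum>x\<in>?X - ?Few. m - r) + (\<Sum>x\<in>?Few. m)"
  proof (intro add_mono sum_mono)
    fix x assume "x \<in> ?X - ?Few"
    then have "\<not> card (guess_errors m msg guess x) \<le> r" by blast
    then show "?c x \<le> m - r" unfolding c by (intro diff_le_mono2) linarith
  next
    show "?c x \<le> m" for x unfolding c by (rule diff_le_self)
  qed
  also have "\<dots> \<le> card ?X * (m - r) + card ?Few * m"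
    using card_mono[OF fin Diff_subset, of ?Few] by simp
  also have "\<dots> \<le> q ^ m * (m - r) + card M * 2 ^ m * q ^ r * m"
    using card_few_errors_le[OF assms] by (simp add: card_PiE)
  finally show ?thesis by (simp add: algebra_simps)
qed

section \<open>The hard distribution\<close>

(* Later coordinates get larger IDs, so coordinate i carries the largest point left after Bob's
   deletions; the offset 1 keeps these points apart from the point 0. *)
definition index_point :: "nat \<Rightarrow> nat \<Rightarrow> nat" where
  "index_point j v = 1 + 16 * j + v"

definition alice_stream :: "nat \<Rightarrow> (nat \<Rightarrow> nat) \<Rightarrow> op list" where
  "alice_stream m x = map Ins (0 # map (\<lambda>j. index_point j (x j)) [0..<m])"

definition bob_stream :: "nat \<Rightarrow> (nat \<Rightarrow> nat) \<Rightarrow> nat \<Rightarrow> op list" where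
  "bob_stream m x i = map Del (map (\<lambda>j. index_point j (x j)) [Suc i..<m])"

lemma bob_stream_tail_after: "bob_stream m (tail_after i x) i = bob_stream m x i"
  unfolding bob_stream_def tail_after_def by simp

lemma index_point_less_index_point:
  assumes "j < j'" and "v < 16"
  shows "index_point j v < index_point j' v'"
  using assms unfolding index_point_def by linarith

lemma index_point_less:
  assumes "j < m" and "v < 16"
  shows "index_point j v \<le> 16 * m"
  using assms unfolding index_point_def by linarith

lemma inj_on_index_points:
  assumes "x \<in> words 16 m"
  shows "inj_on (\<lambda>j. index_point j (x j)) {..<m}"
proof (rule strict_mono_on_imp_inj_on, rule strict_mono_onI)
  fix j j' assume "j \<in> {..<m}" and "j < j'"
  with assms show "index_point j (x j) < index_point j' (x j')"
    by (intro index_point_less_index_point) auto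
qed

lemma final_set_alice_stream:
  "final_set {} (alice_stream m x) = insert 0 ((\<lambda>j. index_point j (x j)) ` {..<m})"
  unfolding alice_stream_def final_set_map_Ins by (auto simp: atLeast0LessThan)

lemma wf_stream_hard_stream:
  assumes "x \<in> words 16 m"
  shows "wf_stream {} (alice_stream m x @ bob_stream m x i)"
proof -
  let ?p = "\<lambda>j. index_point j (x j)"
  have inj: "inj_on ?p {..<m}" using inj_on_index_points[OF assms] .
  moreover have "0 \<notin> ?p ` {..<m}" by (auto simp: index_point_def)
  ultimately have "wf_stream {} (alice_stream m x)"
    unfolding alice_stream_def wf_stream_map_Ins by (auto simp: distinct_map atLeast0LessThan)
  moreover have "inj_on ?p {Suc i..<m}" using inj by (rule inj_on_subset) auto
  then have "wf_stream (final_set {} (alice_stream m x)) (bob_stream m x i)"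
    unfolding final_set_alice_stream bob_stream_def wf_stream_map_Del by (auto simp: distinct_map)
  ultimately show ?thesis by (simp add: wf_stream_append)
qed

lemma final_set_hard_stream:
  assumes "x \<in> words 16 m" and "i < m"
  shows "final_set {} (alice_stream m x @ bob_stream m x i) =
           insert 0 ((\<lambda>j. index_point j (x j)) ` {..i})"
proof -
  let ?p = "\<lambda>j. index_point j (x j)"
  have "?p ` {..<m} - ?p ` {Suc i..<m} = ?p ` ({..<m} - {Suc i..<m})"
    using inj_on_index_points[OF assms(1)] by (intro inj_on_image_set_diff[symmetric]) auto
  also have "{..<m} - {Suc i..<m} = {..i}" using assms(2) by auto
  finally show ?thesis
    unfolding final_set_append final_set_alice_stream bob_stream_def final_set_map_Del
    by (auto simp: insert_Diff_if index_point_def)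
qed

lemma stream_ids_hard_stream:
  assumes "x \<in> words 16 m" and "16 * m < n"
  shows "stream_ids (alice_stream m x @ bob_stream m x i) \<subseteq> {0..<n}"
proof -
  have "index_point j (x j) < n" if "j < m" for j
  proof -
    have "x j < 16" using assms(1) that by auto
    with index_point_less[OF that] assms(2) show ?thesis by fastforce
  qed
  then show ?thesis
    unfolding stream_ids_def alice_stream_def bob_stream_def using assms(2) by auto
qed

lemma MaxCut_final_hard_stream:
  assumes B: "B \<ge> 1" and x: "x \<in> words 16 m" and i: "i < m" and mn: "16 * m < n"
  defines "P \<equiv> final_set {} (alice_stream m x @ bob_stream m x i)"
  shows "B ^ index_point i (x i) \<le> MaxCut (max_power_dist B) P"
    and "MaxCut (max_power_dist B) P \<le> real n ^ 2 * B ^ index_point i (x i)"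
proof -
  let ?p = "\<lambda>j. index_point j (x j)"
  have x16: "x j < 16" if "j < m" for j using x that by auto
  have P: "P = insert 0 (?p ` {..i})" unfolding P_def using final_set_hard_stream[OF x i] .
  have top: "y \<le> ?p i" if "y \<in> P" for y
  proof -
    have "?p j \<le> ?p i" if "j \<le> i" for j
    proof (cases "j = i")
      case False
      with that i have "j < i" "j < m" by simp_all
      then show ?thesis by (simp add: index_point_less_index_point x16 less_imp_le)
    qed simp
    with that show ?thesis unfolding P by auto
  qed
  have "?p i \<le> 16 * m" using index_point_less[OF i x16[OF i]] .
  with top mn have "P \<subseteq> {..<n}" by fastforce
  then have "card P \<le> n" using card_mono[OF finite_lessThan] by fastforce
  then have "real (card P) ^ 2 * B ^ ?p i \<le> real n ^ 2 * B ^ ?p i"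
    using B by (intro mult_right_mono power_mono) auto
  moreover have "finite P" "?p i \<in> P" "0 \<in> P" "0 \<noteq> ?p i"
    unfolding P by (auto simp: index_point_def)
  note bounds = MaxCut_max_power_dist_bounds[OF B this(1,2) _ this(3,4)]
  ultimately show "B ^ ?p i \<le> MaxCut (max_power_dist B) P"
    and "MaxCut (max_power_dist B) P \<le> real n ^ 2 * B ^ ?p i"
    using top by (meson order.trans bounds)+
qed

(* None also stands for runs using more than s bits, so that there are few messages. *)
definition alice_message ::
    "alg \<Rightarrow> nat \<Rightarrow> (nat \<Rightarrow> nat \<Rightarrow> real) \<Rightarrow> nat \<Rightarrow> (nat \<Rightarrow> nat) \<Rightarrow> bool list option" where
  "alice_message A s d m x =
     (case snd (trace d A {} (a_init A) (alice_stream m x)) of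
        Some \<sigma> \<Rightarrow> if length \<sigma> \<le> s then Some \<sigma> else None
      | None \<Rightarrow> None)"

(* Bob treats every ID as valid: by trace_result_mono and run_q_mono this does not change the
   outcome of runs that succeed with the IDs actually seen. *)
definition bob_guess ::
    "alg \<Rightarrow> (nat \<Rightarrow> nat \<Rightarrow> real) \<Rightarrow> (nat \<Rightarrow> real \<Rightarrow> nat) \<Rightarrow> nat \<Rightarrow> bool list option \<Rightarrow>
     nat \<Rightarrow> (nat \<Rightarrow> nat) \<Rightarrow> nat" where
  "bob_guess A d dec m msg i y =
     (case Option.bind msg (\<lambda>\<sigma>. Option.bind (snd (trace d A UNIV \<sigma> (bob_stream m y i)))
                                  (\<lambda>\<sigma>'. run_q d UNIV (a_out A \<sigma>'))) of
        Some E \<Rightarrow> dec i E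
      | None \<Rightarrow> 0)"

definition messages :: "nat \<Rightarrow> bool list option set" where
  "messages s = insert None (Some ` {\<sigma>. length \<sigma> \<le> s})"

lemma finite_messages: "finite (messages s)"
proof -
  have "finite {\<sigma> :: bool list. set \<sigma> \<subseteq> UNIV \<and> length \<sigma> \<le> s}"
    by (rule finite_lists_length_le) simp
  then show ?thesis unfolding messages_def by simp
qed

lemma card_messages_le: "card (messages s) \<le> 2 ^ Suc s"
proof -
  have "card (messages s) \<le> Suc (card {\<sigma> :: bool list. set \<sigma> \<subseteq> UNIV \<and> length \<sigma> \<le> s})"
    unfolding messages_def by (simp add: card_insert_le_m1 card_image)
  also have "\<dots> = Suc (\<Sum>i\<le>s. 2 ^ i)"
    using card_lists_length_le[of "UNIV :: bool set" s] by simp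
  also have "\<dots> = 2 ^ Suc s" by (induction s) auto
  finally show ?thesis .
qed

lemma alice_message_in_messages: "alice_message A s d m x \<in> messages s"
  unfolding alice_message_def messages_def by (auto split: option.split)

lemma bob_guess_simulates_output:
  assumes space: "space_used A (d, alice_stream m x @ bob_stream m x i) \<le> s"
    and out: "alg_output A (d, alice_stream m x @ bob_stream m x i) = Some E"
  shows "bob_guess A d dec m (alice_message A s d m x) i (tail_after i x) = dec i E"
proof -
  let ?xs = "alice_stream m x" and ?ys = "bob_stream m x i"
  obtain \<sigma>' where full: "snd (trace d A {} (a_init A) (?xs @ ?ys)) = Some \<sigma>'"
    and final: "run_q d (stream_ids (?xs @ ?ys)) (a_out A \<sigma>') = Some E"
    using out unfolding alg_output_def by (auto split: option.splits)
  obtain \<tau> where alice: "snd (trace d A {} (a_init A) ?xs) = Some \<tau>"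
    and visited: "\<tau> \<in> set (fst (trace d A {} (a_init A) (?xs @ ?ys)))"
    and bob: "snd (trace d A ({} \<union> op_id ` set ?xs) \<tau> ?ys) = Some \<sigma>'"
    using trace_append_SomeD[OF full] .
  have "length \<tau> \<le> space_used A (d, ?xs @ ?ys)"
    by (rule length_le_space_used) (use visited in simp)
  with space have "length \<tau> \<le> s" by simp
  with alice have "alice_message A s d m x = Some \<tau>" unfolding alice_message_def by simp
  moreover have "snd (trace d A UNIV \<tau> ?ys) = Some \<sigma>'" using trace_result_mono[OF bob] by blast
  moreover have "run_q d UNIV (a_out A \<sigma>') = Some E" using run_q_mono[OF final] by blast
  ultimately show ?thesis unfolding bob_guess_def bob_stream_tail_after by simp
qed

definition decode_level :: "real \<Rightarrow> real \<Rightarrow> real \<Rightarrow> nat \<Rightarrow> real \<Rightarrow> nat" where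
  "decode_level B \<alpha> c i E =
     (SOME v. v < 16 \<and> B ^ index_point i v / \<alpha> \<le> E \<and> E \<le> c * B ^ index_point i v)"

lemma decode_level_eq:
  assumes B: "B \<ge> 1" "c * \<alpha> < B" and \<alpha>: "\<alpha> > 0"
    and v: "v < 16" "B ^ index_point i v / \<alpha> \<le> E" "E \<le> c * B ^ index_point i v"
  shows "decode_level B \<alpha> c i E = v"
proof -
  let ?u = "decode_level B \<alpha> c i E"
  have "?u < 16 \<and> B ^ index_point i ?u / \<alpha> \<le> E \<and> E \<le> c * B ^ index_point i ?u"
    unfolding decode_level_def by (rule someI[where x = v]) (use v in simp)
  then have "index_point i ?u = index_point i v"
    by (intro power_level_unique[OF B \<alpha> _ _ v(2,3)]) simp_all
  then show ?thesis unfolding index_point_def by simp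
qed

definition hard_instance :: "nat \<Rightarrow> nat \<Rightarrow> nat \<Rightarrow> (nat \<Rightarrow> nat) \<times> nat \<Rightarrow> stream_instance" where
  "hard_instance n k m = (\<lambda>(x, i).
     (max_power_dist (real n ^ (k + 2) + 1), alice_stream m x @ bob_stream m x i))"

definition hard_distribution :: "nat \<Rightarrow> nat \<Rightarrow> nat \<Rightarrow> stream_instance pmf" where
  "hard_distribution n k m = map_pmf (hard_instance n k m) (pmf_of_set (words 16 m \<times> {..<m}))"

lemma set_pmf_hard_distribution:
  assumes "m > 0"
  shows "set_pmf (hard_distribution n k m) = hard_instance n k m ` (words 16 m \<times> {..<m})"
proof -
  have "words 16 m \<noteq> {}" by (simp add: PiE_eq_empty_iff lessThan_empty_iff)
  with assms have "words 16 m \<times> {..<m} \<noteq> {}" by auto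
  moreover have "finite (words 16 m \<times> {..<m})"
    by (intro finite_cartesian_product finite_PiE) auto
  ultimately show ?thesis
    unfolding hard_distribution_def by simp
qed

lemma valid_hard_instance:
  assumes "x \<in> words 16 m" and "i < m" and "16 * m < n"
  shows "valid_instance n (hard_instance n k m (x, i))"
  using is_metric_on_max_power_dist[of "real n ^ (k + 2) + 1"] wf_stream_hard_stream[OF assms(1)]
    stream_ids_hard_stream[OF assms(1,3)]
  unfolding valid_instance_def hard_instance_def by simp

lemma success_imp_correct_guess:
  fixes n k m s :: nat
  defines "B \<equiv> real n ^ (k + 2) + 1"
  assumes n: "n > 0" and x: "x \<in> words 16 m" and i: "i < m" and mn: "16 * m < n"
    and space: "space_used A (hard_instance n k m (x, i)) \<le> s"
    and success: "approx_success (real n ^ k) A (hard_instance n k m (x, i))"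
  shows "bob_guess A (max_power_dist B) (decode_level B (real n ^ k) (real n ^ 2)) m
           (alice_message A s (max_power_dist B) m x) i (tail_after i x) = x i"
proof -
  let ?P = "final_set {} (alice_stream m x @ bob_stream m x i)"
  have I: "hard_instance n k m (x, i) = (max_power_dist B, alice_stream m x @ bob_stream m x i)"
    unfolding hard_instance_def B_def by simp
  obtain E where out: "alg_output A (hard_instance n k m (x, i)) = Some E"
    and E: "MaxCut (max_power_dist B) ?P / real n ^ k \<le> E" "E \<le> MaxCut (max_power_dist B) ?P"
    using success unfolding approx_success_def I by auto
  have B: "B \<ge> 1" "real n ^ 2 * real n ^ k < B"
    unfolding B_def by (simp_all add: power_add[symmetric] add.commute)
  note MaxCut = MaxCut_final_hard_stream[OF B(1) x i mn]
  have "B ^ index_point i (x i) / real n ^ k \<le> MaxCut (max_power_dist B) ?P / real n ^ k"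
    using MaxCut(1) by (simp add: divide_right_mono)
  with E(1) have "B ^ index_point i (x i) / real n ^ k \<le> E" by linarith
  moreover have "E \<le> real n ^ 2 * B ^ index_point i (x i)" using MaxCut(2) E(2) by linarith
  moreover have "x i < 16" using x i by auto
  ultimately have "decode_level B (real n ^ k) (real n ^ 2) i E = x i"
    using n by (intro decode_level_eq[OF B]) simp_all
  then show ?thesis using bob_guess_simulates_output[OF space[unfolded I] out[unfolded I]] by simp
qed

lemma prob_success_hard_distribution_le:
  fixes n k m s :: nat and A :: alg
  defines "B \<equiv> real n ^ (k + 2) + 1"
  defines "guess \<equiv> bob_guess A (max_power_dist B) (decode_level B (real n ^ k) (real n ^ 2)) m"
    and "msg \<equiv> alice_message A s (max_power_dist B) m"
  assumes n: "n > 0" and m: "m > 0" and mn: "16 * m < n"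
    and space: "\<forall>I\<in>set_pmf (hard_distribution n k m). space_used A I \<le> s"
  shows "measure_pmf.prob (hard_distribution n k m) {I. approx_success (real n ^ k) A I}
           \<le> real (\<Sum>x\<in>words 16 m. card {i. i < m \<and> guess (msg x) i (tail_after i x) = x i})
              / real (16 ^ m * m)"
proof -
  let ?U = "words 16 m \<times> {..<m}"
  let ?S = "hard_instance n k m -` {I. approx_success (real n ^ k) A I}"
  let ?Correct = "SIGMA x:words 16 m. {i. i < m \<and> guess (msg x) i (tail_after i x) = x i}"
  have fin: "finite ?U" by (intro finite_cartesian_product finite_PiE) auto
  have "words 16 m \<noteq> {}" by (simp add: PiE_eq_empty_iff lessThan_empty_iff)
  with m have ne: "?U \<noteq> {}" by auto
  have "?U \<inter> ?S \<subseteq> ?Correct"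
  proof
    fix p assume "p \<in> ?U \<inter> ?S"
    then obtain x i where p: "p = (x, i)" and x: "x \<in> words 16 m" and i: "i < m"
      and success: "approx_success (real n ^ k) A (hard_instance n k m (x, i))"
      by (cases p) auto
    have "space_used A (hard_instance n k m (x, i)) \<le> s"
      using space set_pmf_hard_distribution[OF m] x i by auto
    then show "p \<in> ?Correct"
      using success_imp_correct_guess[OF n x i mn _ success] x i
      unfolding p guess_def msg_def B_def by simp
  qed
  then have "card (?U \<inter> ?S) \<le> card ?Correct"
    by (intro card_mono) (auto intro: finite_SigmaI finite_PiE)
  also have "\<dots> = (\<Sum>x\<in>words 16 m. card {i. i < m \<and> guess (msg x) i (tail_after i x) = x i})"
    by (intro card_SigmaI finite_PiE) auto
  finally have "real (card (?U \<inter> ?S))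
      \<le> real (\<Sum>x\<in>words 16 m. card {i. i < m \<and> guess (msg x) i (tail_after i x) = x i})"
    by (rule of_nat_mono)
  moreover have "card ?U = 16 ^ m * m" by (simp add: card_cartesian_product card_PiE)
  ultimately show ?thesis
    unfolding hard_distribution_def measure_map_pmf measure_pmf_of_set[OF ne fin]
    by (simp add: divide_right_mono)
qed

lemma index_game_space_bound:
  fixes r s K C :: nat
  assumes r: "r > 0" and K: "K \<le> 2 ^ Suc s"
    and lower: "0.55 * real (16 ^ (2 * r) * (2 * r)) \<le> real C"
    and upper: "C \<le> 2 * r * (K * 2 ^ (2 * r) * 16 ^ r) + 16 ^ (2 * r) * (2 * r - r)"
  shows "2 * r < s + 6"
proof -
  define T :: real where "T = 2 ^ (2 * r)"
  have p16: "(16 :: real) ^ j = 2 ^ (4 * j)" for j by (simp add: power_mult)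
  have T: "T > 0" "real (16 ^ (2 * r)) = T ^ 3 * T" "real (2 ^ (2 * r) * 16 ^ r) = T ^ 3"
    unfolding T_def p16 of_nat_mult of_nat_power of_nat_numeral
    by (simp_all flip: power_mult power_add)
  have "real C \<le> real (2 * r * (K * 2 ^ (2 * r) * 16 ^ r) + 16 ^ (2 * r) * (2 * r - r))"
    using upper by linarith
  also have "\<dots> = T ^ 3 * (2 * r * K + T * r)" using T by (simp add: algebra_simps)
  finally have "T ^ 3 * (1.1 * r * T) \<le> T ^ 3 * (2 * r * K + T * r)"
    using lower T by (simp add: algebra_simps)
  then have "1.1 * r * T \<le> 2 * r * K + T * r" using T by simp
  then have "T \<le> 20 * K" using r by (simp add: algebra_simps)
  also have "\<dots> \<le> 40 * 2 ^ s" using of_nat_mono[OF K] by simp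
  finally have "(2 :: real) ^ (2 * r) < 64 * 2 ^ s"
    unfolding T_def using zero_less_power[of "2 :: real" s] by linarith
  also have "\<dots> = 2 ^ (s + 6)" by (simp add: power_add)
  finally show ?thesis by (simp add: power_strict_increasing_iff)
qed

lemma hard_distribution_space_bound:
  assumes r: "r > 0" and rn: "32 * r < n"
    and space: "\<forall>I\<in>set_pmf (hard_distribution n k (2 * r)). space_used A I \<le> s"
    and success: "0.55 \<le> measure_pmf.prob (hard_distribution n k (2 * r)) {I. approx_success (real n ^ k) A I}"
  shows "2 * r < s + 6"
proof -
  let ?m = "2 * r" and ?B = "real n ^ (k + 2) + 1"
  let ?msg = "alice_message A s (max_power_dist ?B) ?m"
  let ?guess = "bob_guess A (max_power_dist ?B) (decode_level ?B (real n ^ k) (real n ^ 2)) ?m"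
  define C where "C = (\<Sum>x\<in>words 16 ?m. card {i. i < ?m \<and> ?guess (?msg x) i (tail_after i x) = x i})"
  have "measure_pmf.prob (hard_distribution n k ?m) {I. approx_success (real n ^ k) A I}
          \<le> real C / real (16 ^ ?m * ?m)"
    unfolding C_def by (rule prob_success_hard_distribution_le) (use r rn space in auto)
  with success have "0.55 \<le> real C / real (16 ^ ?m * ?m)" by linarith
  moreover have "0 < real (16 ^ ?m * ?m)" using r by simp
  ultimately have lower: "0.55 * real (16 ^ ?m * ?m) \<le> real C" by (simp add: pos_le_divide_eq)
  have upper: "C \<le> ?m * (card (messages s) * 2 ^ ?m * 16 ^ r) + 16 ^ ?m * (?m - r)"
    unfolding C_def using finite_messages alice_message_in_messages
    by (intro sum_correct_guesses_le) auto
  show ?thesis using index_game_space_bound[OF r card_messages_le lower upper] .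
qed

lemma hard_distribution_linear_space:
  fixes n k :: nat
  assumes n: "n \<ge> 2000"
  shows "\<exists>D :: stream_instance pmf. (\<forall>I\<in>set_pmf D. valid_instance n I) \<and>
     (\<forall>(A::alg) (s::nat). (\<forall>I\<in>set_pmf D. space_used A I \<le> s) \<longrightarrow>
        measure_pmf.prob D {I. approx_success (real n ^ k) A I} \<ge> 0.55 \<longrightarrow> real n / 100 \<le> real s)"
proof (intro exI conjI allI impI)
  define r where "r = n div 64"
  have r: "r > 0" "32 * r < n" "real n \<le> 64 * real r + 64" using n unfolding r_def by linarith+
  show "\<forall>I\<in>set_pmf (hard_distribution n k (2 * r)). valid_instance n I"
    using set_pmf_hard_distribution[of "2 * r"] valid_hard_instance r by auto
  fix A s
  assume "\<forall>I\<in>set_pmf (hard_distribution n k (2 * r)). space_used A I \<le> s"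
    and "0.55 \<le> measure_pmf.prob (hard_distribution n k (2 * r)) {I. approx_success (real n ^ k) A I}"
  then have "2 * r < s + 6" using hard_distribution_space_bound r by blast
  then show "real n / 100 \<le> real s" using r n by linarith
qed

theorem lemma5p2:
  shows "\<forall>k::nat. \<exists>c>0. \<exists>n0::nat. \<forall>n\<ge>n0. \<exists>D :: stream_instance pmf.
     (\<forall>I\<in>set_pmf D. valid_instance n I) \<and>
     (\<forall>(A::alg) (s::nat).
        (\<forall>I\<in>set_pmf D. space_used A I \<le> s) \<longrightarrow>
        measure_pmf.prob D {I. approx_success (real n ^ k) A I} \<ge> 0.55 \<longrightarrow>
        c * real n powr (1/3) \<le> real s)"
proof (intro allI exI[of _ "1/100"] conjI exI[of _ 2000] impI)
  fix k n :: nat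
  assume n: "n \<ge> 2000"
  have "real n powr (1/3) \<le> real n powr 1" using n by (intro powr_mono) auto
  then have "1/100 * real n powr (1/3) \<le> real n / 100" using n by simp
  then show "\<exists>D :: stream_instance pmf. (\<forall>I\<in>set_pmf D. valid_instance n I) \<and>
     (\<forall>(A::alg) (s::nat). (\<forall>I\<in>set_pmf D. space_used A I \<le> s) \<longrightarrow>
        measure_pmf.prob D {I. approx_success (real n ^ k) A I} \<ge> 0.55 \<longrightarrow>
        1/100 * real n powr (1/3) \<le> real s)"
    using hard_distribution_linear_space[OF n, of k] by (meson order.trans)
qed simp

end
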